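(* Let $\eta\colon\mathcal{D}\to\mathcal{D}$ be a polynomial $\tau$-equivariant map, i.e. of the form $\eta(\lambda_1,\lambda_2)=(\Psi(\lambda_1,\lambda_2),\Psi(\lambda_2,\lambda_1))$ with $\Psi$ polynomial. Then $\eta$ extends to a polynomial map $\Phi\colon\mathcal{M}(2;\mathbb{C})\to\mathcal{M}(2;\mathbb{C})$ compatible with conjugation (i.e. $\Phi_{|\mathcal{D}}=\eta$).
   Context: $\mathcal{D}$ is the set of diagonal $2\times2$ complex matrices, identified with $\mathbb{C}^2$ via $\mathrm{diag}(\lambda_1,\lambda_2)\mapsto(\lambda_1,\lambda_2)$; $\tau(\lambda_1,\lambda_2)=(\lambda_2,\lambda_1)$. A map $\Phi$ is compatible with conjugation if $\mathrm{A}\Phi(\mathrm{M})\mathrm{A}^{-1}=\Phi(\mathrm{A}\mathrm{M}\mathrm{A}^{-1})$ for all $\mathrm{A}\in\mathrm{GL}(2;\mathbb{C})$ and all $\mathrm{M}$ where defined. *)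

theory Defs
  imports "HOL-Analysis.Analysis"
begin

definition poly2 :: "(complex \<Rightarrow> complex \<Rightarrow> complex) \<Rightarrow> bool" where
  "poly2 f \<longleftrightarrow> (\<exists>S :: (nat \<times> nat) set. \<exists>c :: nat \<times> nat \<Rightarrow> complex. finite S \<and>
     (\<forall>x y. f x y = (\<Sum>(i, j)\<in>S. c (i, j) * x ^ i * y ^ j)))"

definition poly4 :: "(complex \<Rightarrow> complex \<Rightarrow> complex \<Rightarrow> complex \<Rightarrow> complex) \<Rightarrow> bool" where
  "poly4 f \<longleftrightarrow> (\<exists>S :: (nat \<times> nat \<times> nat \<times> nat) set.
     \<exists>c :: nat \<times> nat \<times> nat \<times> nat \<Rightarrow> complex. finite S \<and>
     (\<forall>a b d e. f a b d e = (\<Sum>(i, j, k, l)\<in>S. c (i, j, k, l) * a ^ i * b ^ j * d ^ k * e ^ l)))"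

definition poly_matrix_map :: "(complex^2^2 \<Rightarrow> complex^2^2) \<Rightarrow> bool" where
  "poly_matrix_map \<Phi> \<longleftrightarrow> (\<forall>r s. poly4 (\<lambda>a b d e.
      \<Phi> (\<chi> i j. if i = 1 then (if j = 1 then a else b) else (if j = 1 then d else e)) $ r $ s))"

definition compatible_conj :: "(complex^2^2 \<Rightarrow> complex^2^2) \<Rightarrow> bool" where
  "compatible_conj \<Phi> \<longleftrightarrow> (\<forall>A M. invertible A \<longrightarrow>
      A ** \<Phi> M ** matrix_inv A = \<Phi> (A ** M ** matrix_inv A))"

definition diag2 :: "complex \<Rightarrow> complex \<Rightarrow> complex^2^2" where
  "diag2 l1 l2 = (\<chi> i j. if i = j then (if i = 1 then l1 else l2) else 0)"

end

theory Submission
  imports Defs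
begin

text \<open>Write \<open>adj M = tr M \<cdot> I - M\<close>, which for \<open>2 \<times> 2\<close> matrices is the adjugate.
  If \<open>\<Psi> = \<Sum> c\<^sub>i\<^sub>j x\<^sup>i y\<^sup>j\<close>, put \<open>\<Phi> M = \<Sum> c\<^sub>i\<^sub>j M\<^sup>i (adj M)\<^sup>j\<close>. Its entries are polynomials in
  those of \<open>M\<close>; it commutes with conjugation because conjugation is a ring automorphism
  of the matrix algebra that fixes scalars and preserves the trace; and on
  \<open>diag(\<lambda>\<^sub>1, \<lambda>\<^sub>2)\<close>, where \<open>adj\<close> swaps the two eigenvalues, it yields
  \<open>diag(\<Psi>(\<lambda>\<^sub>1, \<lambda>\<^sub>2), \<Psi>(\<lambda>\<^sub>2, \<lambda>\<^sub>1))\<close>.\<close>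

definition monomial4 :: "nat \<times> nat \<times> nat \<times> nat \<Rightarrow> complex \<Rightarrow> complex \<Rightarrow> complex \<Rightarrow> complex \<Rightarrow> complex"
  where "monomial4 p a b d e = (case p of (i, j, k, l) \<Rightarrow> a ^ i * b ^ j * d ^ k * e ^ l)"

lemma monomial4_mult:
  "monomial4 (i, j, k, l) a b d e * monomial4 (i', j', k', l') a b d e =
     monomial4 (i + i', j + j', k + k', l + l') a b d e"
  by (simp add: monomial4_def power_add mult_ac)

lemma poly4_iff_monomial_sum:
  "poly4 f \<longleftrightarrow> (\<exists>S c. finite S \<and> (\<forall>a b d e. f a b d e = (\<Sum>p\<in>S. c p * monomial4 p a b d e)))"
proof -
  have "(\<Sum>(i, j, k, l)\<in>S. c (i, j, k, l) * a ^ i * b ^ j * d ^ k * e ^ l)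
          = (\<Sum>p\<in>S. c p * monomial4 p a b d e)" for S c a b d e
    by (rule sum.cong) (auto simp: monomial4_def mult.assoc)
  then show ?thesis
    unfolding poly4_def by simp
qed

text \<open>The exponent map \<open>q\<close> need not be injective.\<close>

lemma poly4_indexed_sum:
  assumes "finite I"
    and "\<And>a b d e. f a b d e = (\<Sum>n\<in>I. c n * monomial4 (q n) a b d e)"
  shows "poly4 f"
  unfolding poly4_iff_monomial_sum
proof (intro exI conjI allI)
  show "finite (q ` I)"
    using assms(1) by simp
  fix a b d e
  have "f a b d e = (\<Sum>p\<in>q ` I. \<Sum>n\<in>{n \<in> I. q n = p}. c n * monomial4 (q n) a b d e)"
    using assms by (simp add: sum.image_gen[OF assms(1), of _ q])
  also have "\<dots> = (\<Sum>p\<in>q ` I. (\<Sum>n\<in>{n \<in> I. q n = p}. c n) * monomial4 p a b d e)"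
    by (rule sum.cong) (auto simp: sum_distrib_right)
  finally show "f a b d e = (\<Sum>p\<in>q ` I. (\<Sum>n\<in>{n \<in> I. q n = p}. c n) * monomial4 p a b d e)" .
qed

lemma poly4_monomial: "poly4 (\<lambda>a b d e. k * monomial4 p a b d e)"
  by (rule poly4_indexed_sum[where I = "{()}"]) auto

lemma poly4_const: "poly4 (\<lambda>a b d e. k)"
  using poly4_monomial[of k "(0, 0, 0, 0)"] by (simp add: monomial4_def)

lemma poly4_variables:
  "poly4 (\<lambda>a b d e. a)" "poly4 (\<lambda>a b d e. b)" "poly4 (\<lambda>a b d e. d)" "poly4 (\<lambda>a b d e. e)"
  using poly4_monomial[of 1 "(1, 0, 0, 0)"] poly4_monomial[of 1 "(0, 1, 0, 0)"]
    poly4_monomial[of 1 "(0, 0, 1, 0)"] poly4_monomial[of 1 "(0, 0, 0, 1)"]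
  by (simp_all add: monomial4_def)

lemma poly4_add:
  assumes "poly4 f" "poly4 g"
  shows "poly4 (\<lambda>a b d e. f a b d e + g a b d e)"
proof -
  obtain S c where S: "finite S" "\<And>a b d e. f a b d e = (\<Sum>p\<in>S. c p * monomial4 p a b d e)"
    using assms(1) unfolding poly4_iff_monomial_sum by blast
  obtain T c' where T: "finite T" "\<And>a b d e. g a b d e = (\<Sum>p\<in>T. c' p * monomial4 p a b d e)"
    using assms(2) unfolding poly4_iff_monomial_sum by blast
  show ?thesis
    by (rule poly4_indexed_sum[where I = "S <+> T" and c = "case_sum c c'" and q = "case_sum id id"])
      (use S T in \<open>auto simp: sum.Plus\<close>)
qed

lemma poly4_mult:
  assumes "poly4 f" "poly4 g"
  shows "poly4 (\<lambda>a b d e. f a b d e * g a b d e)"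
proof -
  obtain S c where S: "finite S" "\<And>a b d e. f a b d e = (\<Sum>p\<in>S. c p * monomial4 p a b d e)"
    using assms(1) unfolding poly4_iff_monomial_sum by blast
  obtain T c' where T: "finite T" "\<And>a b d e. g a b d e = (\<Sum>p\<in>T. c' p * monomial4 p a b d e)"
    using assms(2) unfolding poly4_iff_monomial_sum by blast
  define add_exps :: "(nat \<times> nat \<times> nat \<times> nat) \<times> (nat \<times> nat \<times> nat \<times> nat) \<Rightarrow> nat \<times> nat \<times> nat \<times> nat"
    where "add_exps = (\<lambda>((i, j, k, l), (i', j', k', l')). (i + i', j + j', k + k', l + l'))"
  show ?thesis
  proof (rule poly4_indexed_sum[where I = "S \<times> T" and c = "\<lambda>(p, p'). c p * c' p'" and q = add_exps])
    show "finite (S \<times> T)"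
      using S T by simp
    fix a b d e
    have "f a b d e * g a b d e
        = (\<Sum>(p, p')\<in>S \<times> T. (c p * monomial4 p a b d e) * (c' p' * monomial4 p' a b d e))"
      using S T by (simp add: sum_product sum.cartesian_product)
    also have "\<dots> = (\<Sum>n\<in>S \<times> T. (case n of (p, p') \<Rightarrow> c p * c' p') * monomial4 (add_exps n) a b d e)"
      by (rule sum.cong) (auto simp: add_exps_def monomial4_mult[symmetric] mult_ac)
    finally show "f a b d e * g a b d e
        = (\<Sum>n\<in>S \<times> T. (case n of (p, p') \<Rightarrow> c p * c' p') * monomial4 (add_exps n) a b d e)" .
  qed
qed

lemma poly4_diff:
  assumes "poly4 f" "poly4 g"
  shows "poly4 (\<lambda>a b d e. f a b d e - g a b d e)"
  using poly4_add[OF assms(1) poly4_mult[OF poly4_const[of "-1"] assms(2)]] by simp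

lemma poly4_sum:
  "finite I \<Longrightarrow> (\<And>n. n \<in> I \<Longrightarrow> poly4 (f n)) \<Longrightarrow> poly4 (\<lambda>a b d e. \<Sum>n\<in>I. f n a b d e)"
proof (induction I rule: finite_induct)
  case empty
  then show ?case
    using poly4_const[of 0] by simp
next
  case (insert x F)
  then show ?case
    using poly4_add[of "f x" "\<lambda>a b d e. \<Sum>n\<in>F. f n a b d e"] by simp
qed

definition poly4_matrix :: "(complex \<Rightarrow> complex \<Rightarrow> complex \<Rightarrow> complex \<Rightarrow> complex^'n^'m) \<Rightarrow> bool"
  where "poly4_matrix F \<longleftrightarrow> (\<forall>r s. poly4 (\<lambda>a b d e. F a b d e $ r $ s))"

definition matrix2 :: "'a \<Rightarrow> 'a \<Rightarrow> 'a \<Rightarrow> 'a \<Rightarrow> 'a^2^2"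
  where "matrix2 a b d e = (\<chi> i j. if i = 1 then (if j = 1 then a else b) else (if j = 1 then d else e))"

lemma poly_matrix_map_iff_poly4_matrix:
  "poly_matrix_map \<Phi> \<longleftrightarrow> poly4_matrix (\<lambda>a b d e. \<Phi> (matrix2 a b d e))"
  unfolding poly_matrix_map_def poly4_matrix_def matrix2_def ..

lemma poly4_matrix_matrix2: "poly4_matrix matrix2"
  unfolding poly4_matrix_def matrix2_def
proof (intro allI)
  fix r s :: 2
  show "poly4 (\<lambda>a b d e. (\<chi> i j. if i = 1 then (if j = 1 then a else b) else (if j = 1 then d else e)) $ r $ s)"
    by (cases "r = 1"; cases "s = 1") (simp_all add: poly4_variables)
qed

lemma poly4_matrix_mat:
  assumes "poly4 f"
  shows "poly4_matrix (\<lambda>a b d e. mat (f a b d e) :: complex^'n^'n)"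
  unfolding poly4_matrix_def
proof (intro allI)
  fix r s :: 'n
  show "poly4 (\<lambda>a b d e. mat (f a b d e) $ r $ s)"
    using assms by (cases "r = s") (simp_all add: mat_def poly4_const)
qed

lemma poly4_matrix_mult:
  "poly4_matrix F \<Longrightarrow> poly4_matrix G \<Longrightarrow> poly4_matrix (\<lambda>a b d e. F a b d e ** G a b d e)"
  unfolding poly4_matrix_def matrix_matrix_mult_def by (auto intro!: poly4_sum poly4_mult)

lemma poly4_matrix_diff:
  "poly4_matrix F \<Longrightarrow> poly4_matrix G \<Longrightarrow> poly4_matrix (\<lambda>a b d e. F a b d e - G a b d e)"
  unfolding poly4_matrix_def by (auto intro!: poly4_diff)

lemma poly4_matrix_sum:
  "finite S \<Longrightarrow> (\<And>p. p \<in> S \<Longrightarrow> poly4_matrix (F p)) \<Longrightarrow> poly4_matrix (\<lambda>a b d e. \<Sum>p\<in>S. F p a b d e)"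
  unfolding poly4_matrix_def by (auto simp: sum_component intro!: poly4_sum)

lemma poly4_trace: "poly4_matrix F \<Longrightarrow> poly4 (\<lambda>a b d e. trace (F a b d e))"
  unfolding poly4_matrix_def trace_def by (auto intro!: poly4_sum)

fun matpow :: "'a::semiring_1^'n^'n \<Rightarrow> nat \<Rightarrow> 'a^'n^'n" where
  "matpow M 0 = mat 1"
| "matpow M (Suc n) = M ** matpow M n"

text \<open>By Cayley--Hamilton, \<open>M\<^sup>2 - tr M \<cdot> M + det M \<cdot> I = 0\<close>, so this is the adjugate of a
  \<open>2 \<times> 2\<close> matrix; expressing it through the trace makes conjugation invariance immediate.\<close>

definition adj2 :: "'a::ring_1^2^2 \<Rightarrow> 'a^2^2"
  where "adj2 M = mat (trace M) - M"

lemma poly4_matrix_matpow: "poly4_matrix F \<Longrightarrow> poly4_matrix (\<lambda>a b d e. matpow (F a b d e) n)"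
  by (induction n) (auto intro: poly4_matrix_mat poly4_const poly4_matrix_mult)

lemma poly4_matrix_adj2: "poly4_matrix F \<Longrightarrow> poly4_matrix (\<lambda>a b d e. adj2 (F a b d e))"
  unfolding adj2_def by (intro poly4_matrix_diff poly4_matrix_mat poly4_trace)

lemma matrix_inv_mult:
  assumes "invertible A"
  shows "A ** matrix_inv A = mat 1" "matrix_inv A ** A = mat 1"
proof -
  have "\<exists>A'. A ** A' = mat 1 \<and> A' ** A = mat 1"
    using assms unfolding invertible_def by blast
  from someI_ex[OF this] show "A ** matrix_inv A = mat 1" "matrix_inv A ** A = mat 1"
    unfolding matrix_inv_def by auto
qed

lemma mat_matrix_mult_commute: "mat k ** A = A ** mat (k::'a::comm_semiring_1)"
  by (simp add: vec_eq_iff matrix_matrix_mult_def mat_def if_distrib if_distribR mult.commute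
      cong: if_cong)

definition conjugate :: "'a::semiring_1^'n^'n \<Rightarrow> 'a^'n^'n \<Rightarrow> 'a^'n^'n"
  where "conjugate A X = A ** X ** matrix_inv A"

lemma conjugate_mult:
  "invertible A \<Longrightarrow> conjugate A (X ** Y) = conjugate A X ** conjugate A Y"
  unfolding conjugate_def
  by (metis matrix_inv_mult(2) matrix_mul_assoc matrix_mul_rid)

lemma conjugate_mat:
  "invertible A \<Longrightarrow> conjugate A (mat k) = mat (k::'a::comm_semiring_1)"
  unfolding conjugate_def
  by (metis mat_matrix_mult_commute matrix_inv_mult(1) matrix_mul_assoc matrix_mul_lid)

lemma conjugate_add: "conjugate A (X + Y) = conjugate A X + conjugate A Y"
  unfolding conjugate_def
  by (simp add: vec_eq_iff matrix_matrix_mult_def distrib_left distrib_right sum.distrib)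

lemma conjugate_diff: "conjugate A (X - Y) = conjugate A X - conjugate (A::'a::comm_ring_1^'n^'n) Y"
  using conjugate_add[of A "X - Y" Y] by (simp add: eq_diff_eq)

lemma conjugate_sum: "conjugate A (\<Sum>p\<in>S. F p) = (\<Sum>p\<in>S. conjugate A (F p))"
  by (rule sum_comp_morphism[symmetric, unfolded o_def]) (simp_all add: conjugate_add, simp add: conjugate_def)

lemma trace_conjugate:
  "invertible A \<Longrightarrow> trace (conjugate A X) = trace (X::'a::comm_semiring_1^'n^'n)"
  unfolding conjugate_def
  by (metis trace_mul_sym matrix_inv_mult(2) matrix_mul_assoc matrix_mul_lid)

lemma conjugate_matpow:
  "invertible A \<Longrightarrow> conjugate A (matpow X n) = matpow (conjugate A (X::'a::comm_semiring_1^'n^'n)) n"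
  by (induction n) (simp_all add: conjugate_mat conjugate_mult)

lemma conjugate_adj2:
  "invertible A \<Longrightarrow> conjugate A (adj2 X) = adj2 (conjugate A (X::'a::comm_ring_1^2^2))"
  unfolding adj2_def by (simp add: conjugate_diff conjugate_mat trace_conjugate)

lemma mat_eq_diag2: "mat k = diag2 k k"
  by (simp add: vec_eq_iff mat_def diag2_def)

lemma diag2_mult: "diag2 a b ** diag2 c d = diag2 (a * c) (b * d)"
  by (simp add: vec_eq_iff matrix_matrix_mult_def diag2_def sum_2 forall_2)

lemma matpow_diag2: "matpow (diag2 a b) n = diag2 (a ^ n) (b ^ n)"
  by (induction n) (simp_all add: mat_eq_diag2 diag2_mult)

lemma adj2_diag2: "adj2 (diag2 a b) = diag2 b a"
  by (simp add: adj2_def vec_eq_iff mat_def trace_def diag2_def sum_2 forall_2)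

lemma sum_diag2: "(\<Sum>p\<in>S. diag2 (f p) (g p)) = diag2 (\<Sum>p\<in>S. f p) (\<Sum>p\<in>S. g p)"
  by (simp add: vec_eq_iff sum_component diag2_def if_distrib)

theorem proposition2p4:
  fixes \<Psi> :: "complex \<Rightarrow> complex \<Rightarrow> complex"
  assumes "poly2 \<Psi>"
  shows "\<exists>\<Phi>. poly_matrix_map \<Phi> \<and> compatible_conj \<Phi> \<and>
           (\<forall>l1 l2. \<Phi> (diag2 l1 l2) = diag2 (\<Psi> l1 l2) (\<Psi> l2 l1))"
proof -
  obtain S c where S: "finite S" "\<And>x y. \<Psi> x y = (\<Sum>(i, j)\<in>S. c (i, j) * x ^ i * y ^ j)"
    using assms unfolding poly2_def by blast
  define \<Phi> where "\<Phi> M = (\<Sum>(i, j)\<in>S. mat (c (i, j)) ** matpow M i ** matpow (adj2 M) j)" for M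
  have "poly_matrix_map \<Phi>"
    unfolding poly_matrix_map_iff_poly4_matrix \<Phi>_def split_def
    by (intro poly4_matrix_sum S poly4_matrix_mult poly4_matrix_mat poly4_const
        poly4_matrix_matpow poly4_matrix_adj2 poly4_matrix_matrix2)
  moreover have "compatible_conj \<Phi>"
    unfolding compatible_conj_def conjugate_def[symmetric] \<Phi>_def
    by (simp add: conjugate_sum split_def conjugate_mult conjugate_mat conjugate_matpow conjugate_adj2)
  moreover have "\<Phi> (diag2 l1 l2) = diag2 (\<Psi> l1 l2) (\<Psi> l2 l1)" for l1 l2
    unfolding \<Phi>_def S(2) matpow_diag2 adj2_diag2 mat_eq_diag2 diag2_mult split_def sum_diag2
    by (simp add: mult_ac)
  ultimately show ?thesis
    by blast
qed

end
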